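(* Let $\mathcal W'_r=\{W\in\mathcal W_r: W=\widehat W\}$ be the collection of primary wiretap sets. Then $\min_{W\in\mathcal W_r}\Omega(W)=\min_{W\in\mathcal W'_r}\Omega(W)$.
   Context: $\mathcal G=(\mathcal V,\mathcal E)$ is a finite directed acyclic graph (multiple edges allowed); $S$ is the set of source nodes (exactly the nodes without input edges), $\rho\notin S$ the sink (no output edges), and every node other than $\rho$ has a directed path to $\rho$. For a node $\sigma$ and edge $e$, $\sigma\to e$ means there is a directed path from $\sigma$ whose last edge is $e$. For $C\subseteq\mathcal E$: $D_C=\{\sigma\in S:\exists e\in C,\ \sigma\to e\}$, $I_C=\{\sigma\in S:$ no path from $\sigma$ to $\rho$ after deleting $C\}$; $\Lambda(\mathcal N)=\{C\subseteq\mathcal E:I_C\neq\emptyset\}$. $\mathcal W_r=\{W\subseteq\mathcal E:|W|\le r\}$ for a nonnegative integer $r$. For $W\subseteq\mathcal E$, $\Omega(W)=\min\{|C|-|W|: C\in\Lambda(\mathcal N),\ W\subseteq C,\ D_W\subseteq I_C\}$. Cuts separating edge sets: for a node set $U$ and edge set $W$, subdivide each $e\in W$ by a new node $v_e$ splitting $e$ into $e^1$ (from $\mathrm{tail}(e)$ to $v_e$) and $e^2$ (from $v_e$ to $\mathrm{head}(e)$); a cut separating $W$ from $U$ is an edge set obtained from an edge set of the subdivided graph whose deletion leaves no path from $U$ to any $v_e$, after replacing each $e^1$ or $e^2$ by $e$. A minimum cut is one of minimum size. A minimum cut separating $W$ from $U$ is primary if it separates from $U$ every minimum cut separating $W$ from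 $U$; it exists and is unique. $\widehat W$ denotes the primary minimum cut separating $W$ from $D_W$; $W$ is called primary if $W=\widehat W$. *)

theory Defs
  imports Main
begin

text \<open>A finite directed multigraph: node set V, edge set E (edges of an abstract
type 'e, allowing parallel edges), with tail and head maps tail, head.\<close>

definition arcs :: "('e \<Rightarrow> 'v) \<Rightarrow> ('e \<Rightarrow> 'v) \<Rightarrow> 'e set \<Rightarrow> ('v \<times> 'v) set" where
  "arcs tail head F = {(tail e, head e) | e. e \<in> F}"

definition reach :: "('e \<Rightarrow> 'v) \<Rightarrow> ('e \<Rightarrow> 'v) \<Rightarrow> 'e set \<Rightarrow> 'v \<Rightarrow> 'v \<Rightarrow> bool" where
  "reach tail head F u v \<longleftrightarrow> (u, v) \<in> (arcs tail head F)\<^sup>*"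

definition sources :: "'v set \<Rightarrow> 'e set \<Rightarrow> ('e \<Rightarrow> 'v) \<Rightarrow> ('e \<Rightarrow> 'v) \<Rightarrow> 'v set" where
  "sources V E tail head = {v \<in> V. \<not> (\<exists>e\<in>E. head e = v)}"

definition network :: "'v set \<Rightarrow> 'e set \<Rightarrow> ('e \<Rightarrow> 'v) \<Rightarrow> ('e \<Rightarrow> 'v) \<Rightarrow> 'v \<Rightarrow> bool" where
  "network V E tail head \<rho> \<longleftrightarrow>
     finite V \<and> finite E \<and> (\<forall>e\<in>E. tail e \<in> V \<and> head e \<in> V) \<and>
     acyclic (arcs tail head E) \<and>
     \<rho> \<in> V \<and> \<rho> \<notin> sources V E tail head \<and> (\<forall>e\<in>E. tail e \<noteq> \<rho>) \<and>
     (\<forall>v\<in>V. v \<noteq> \<rho> \<longrightarrow> reach tail head E v \<rho>)"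

definition to_edge :: "'e set \<Rightarrow> ('e \<Rightarrow> 'v) \<Rightarrow> ('e \<Rightarrow> 'v) \<Rightarrow> 'v \<Rightarrow> 'e \<Rightarrow> bool" where
  "to_edge E tail head \<sigma> e \<longleftrightarrow> e \<in> E \<and> reach tail head E \<sigma> (tail e)"

definition D_set :: "'v set \<Rightarrow> 'e set \<Rightarrow> ('e \<Rightarrow> 'v) \<Rightarrow> ('e \<Rightarrow> 'v) \<Rightarrow> 'e set \<Rightarrow> 'v set" where
  "D_set V E tail head C = {\<sigma> \<in> sources V E tail head. \<exists>e\<in>C. to_edge E tail head \<sigma> e}"

definition I_set :: "'v set \<Rightarrow> 'e set \<Rightarrow> ('e \<Rightarrow> 'v) \<Rightarrow> ('e \<Rightarrow> 'v) \<Rightarrow> 'v \<Rightarrow> 'e set \<Rightarrow> 'v set" where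
  "I_set V E tail head \<rho> C = {\<sigma> \<in> sources V E tail head. \<not> reach tail head (E - C) \<sigma> \<rho>}"

definition Lambda :: "'v set \<Rightarrow> 'e set \<Rightarrow> ('e \<Rightarrow> 'v) \<Rightarrow> ('e \<Rightarrow> 'v) \<Rightarrow> 'v \<Rightarrow> 'e set set" where
  "Lambda V E tail head \<rho> = {C. C \<subseteq> E \<and> I_set V E tail head \<rho> C \<noteq> {}}"

definition Wr :: "'e set \<Rightarrow> nat \<Rightarrow> 'e set set" where
  "Wr E r = {W. W \<subseteq> E \<and> card W \<le> r}"

definition Omega :: "'v set \<Rightarrow> 'e set \<Rightarrow> ('e \<Rightarrow> 'v) \<Rightarrow> ('e \<Rightarrow> 'v) \<Rightarrow> 'v \<Rightarrow> 'e set \<Rightarrow> nat" where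
  "Omega V E tail head \<rho> W = Min {card C - card W | C. C \<in> Lambda V E tail head \<rho> \<and> W \<subseteq> C \<and>
       D_set V E tail head W \<subseteq> I_set V E tail head \<rho> C}"

text \<open>Subdivided graph w.r.t. W: node Inl v for each original node, node Inr e = v_e
for e \<in> W; edge (e,0) is an unsubdivided edge e \<notin> W, (e,1) = e^1, (e,2) = e^2.\<close>

definition sub_edges :: "'e set \<Rightarrow> 'e set \<Rightarrow> ('e \<times> nat) set" where
  "sub_edges E W = {(e, 0) | e. e \<in> E \<and> e \<notin> W} \<union> {(e, 1) | e. e \<in> W} \<union> {(e, 2) | e. e \<in> W}"

definition sub_tl :: "('e \<Rightarrow> 'v) \<Rightarrow> 'e \<times> nat \<Rightarrow> 'v + 'e" where
  "sub_tl tail x = (if snd x = 2 then Inr (fst x) else Inl (tail (fst x)))"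

definition sub_hd :: "('e \<Rightarrow> 'v) \<Rightarrow> 'e \<times> nat \<Rightarrow> 'v + 'e" where
  "sub_hd head x = (if snd x = 1 then Inr (fst x) else Inl (head (fst x)))"

text \<open>C is a cut separating W from U: obtained (via e^1, e^2 \<mapsto> e) from an edge set Ct
of the subdivided graph whose deletion leaves no path from U to any v_e.\<close>
definition is_cut :: "'e set \<Rightarrow> ('e \<Rightarrow> 'v) \<Rightarrow> ('e \<Rightarrow> 'v) \<Rightarrow> 'v set \<Rightarrow> 'e set \<Rightarrow> 'e set \<Rightarrow> bool" where
  "is_cut E tail head U W C \<longleftrightarrow>
     (\<exists>Ct. Ct \<subseteq> sub_edges E W \<and> C = fst ` Ct \<and>
        (\<forall>u\<in>U. \<forall>e\<in>W. \<not> reach (sub_tl tail) (sub_hd head) (sub_edges E W - Ct) (Inl u) (Inr e)))"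

definition is_min_cut :: "'e set \<Rightarrow> ('e \<Rightarrow> 'v) \<Rightarrow> ('e \<Rightarrow> 'v) \<Rightarrow> 'v set \<Rightarrow> 'e set \<Rightarrow> 'e set \<Rightarrow> bool" where
  "is_min_cut E tail head U W C \<longleftrightarrow>
     is_cut E tail head U W C \<and> (\<forall>C'. is_cut E tail head U W C' \<longrightarrow> card C \<le> card C')"

definition is_primary_min_cut :: "'e set \<Rightarrow> ('e \<Rightarrow> 'v) \<Rightarrow> ('e \<Rightarrow> 'v) \<Rightarrow> 'v set \<Rightarrow> 'e set \<Rightarrow> 'e set \<Rightarrow> bool" where
  "is_primary_min_cut E tail head U W P \<longleftrightarrow>
     is_min_cut E tail head U W P \<and> (\<forall>C. is_min_cut E tail head U W C \<longrightarrow> is_cut E tail head U C P)"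

definition hat :: "'v set \<Rightarrow> 'e set \<Rightarrow> ('e \<Rightarrow> 'v) \<Rightarrow> ('e \<Rightarrow> 'v) \<Rightarrow> 'e set \<Rightarrow> 'e set" where
  "hat V E tail head W = (THE P. is_primary_min_cut E tail head (D_set V E tail head W) W P)"

end

theory Submission
  imports Defs "HOL-Library.Product_Lexorder"
begin

text \<open>Among the wiretap sets of size at most r choose W lexicographically minimising
  (\<Omega>(W), |W|, number of edges reachable from D_W without passing W). Replacing a cut that
  separates W from D_W by its edges fed only by sources in D_W never increases \<Omega>, so W is a
  minimum cut separating itself from D_W. If some minimum cut C had an edge outside W reachable
  from D_W while avoiding W, the edges of C met first on paths from D_W would form a competitor
  of the same \<Omega> and size with strictly fewer reachable edges. Hence every minimum cut lies
  behind W, i.e. W is primary, and the minimum of \<Omega> is attained at a primary set.\<close>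

lemma arcs_iff: "(x, y) \<in> arcs t h F \<longleftrightarrow> (\<exists>f\<in>F. x = t f \<and> y = h f)"
  by (auto simp: arcs_def)

lemma reach_refl: "reach t h F x x"
  by (simp add: reach_def)

lemma reach_step: "reach t h F x (t f) \<Longrightarrow> f \<in> F \<Longrightarrow> reach t h F x (h f)"
  unfolding reach_def by (rule rtrancl_into_rtrancl) (auto simp: arcs_iff)

lemma reach_trans: "reach t h F x y \<Longrightarrow> reach t h F y z \<Longrightarrow> reach t h F x z"
  unfolding reach_def by (rule rtrancl_trans)

lemma reach_mono: "reach t h F x y \<Longrightarrow> F \<subseteq> G \<Longrightarrow> reach t h G x y"
proof -
  assume "F \<subseteq> G" "reach t h F x y"
  then have "arcs t h F \<subseteq> arcs t h G" by (auto simp: arcs_def)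
  then show ?thesis using \<open>reach t h F x y\<close> unfolding reach_def by (meson rtrancl_mono subsetD)
qed

lemma reach_empty_iff: "reach t h {} x y \<longleftrightarrow> x = y"
  by (simp add: reach_def arcs_def)

lemma reach_induct[consumes 1, case_names refl step]:
  assumes "reach t h F x y" "P x"
    "\<And>f. f \<in> F \<Longrightarrow> reach t h F x (t f) \<Longrightarrow> P (t f) \<Longrightarrow> P (h f)"
  shows "P y"
  using assms(1) unfolding reach_def
proof (induction rule: rtrancl_induct)
  case base
  then show ?case using assms(2) by simp
next
  case (step y z)
  then obtain f where "f \<in> F" "y = t f" "z = h f" by (auto simp: arcs_iff)
  then show ?case using step assms(3) unfolding reach_def by blast
qed

lemma reach_exit_edge:
  assumes "reach t h F u x" "\<not> reach t h G u x"
  shows "\<exists>p\<in>F - G. reach t h (F \<inter> G) u (t p) \<and> reach t h F (h p) x"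
proof -
  have "reach t h (F \<inter> G) u x \<or> (\<exists>p\<in>F - G. reach t h (F \<inter> G) u (t p) \<and> reach t h F (h p) x)"
    using assms(1)
  proof (induction rule: reach_induct)
    case refl
    then show ?case by (simp add: reach_refl)
  next
    case (step f)
    then consider "reach t h (F \<inter> G) u (t f)"
      | p where "p \<in> F - G" "reach t h (F \<inter> G) u (t p)" "reach t h F (h p) (t f)"
      by blast
    then show ?case
    proof cases
      case 1
      show ?thesis
      proof (cases "f \<in> G")
        case True
        then show ?thesis using reach_step[OF 1] step(1) by blast
      next
        case False
        then show ?thesis using 1 step(1) reach_refl[of t h F "h f"] by blast
      qed
    next
      case 2
      then show ?thesis using reach_step[OF 2(3) step(1)] by blast
    qed
  qed
  then show ?thesis using assms(2) reach_mono[of t h "F \<inter> G" u x G] by blast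
qed

lemma reach_insert_to_tail:
  assumes "reach t h (insert e F) u (t e)"
  shows "reach t h F u (t e)"
proof (rule ccontr)
  assume "\<not> reach t h F u (t e)"
  from reach_exit_edge[OF assms this] obtain p
    where "p \<in> insert e F - F" "reach t h (insert e F \<inter> F) u (t p)" by blast
  moreover have "insert e F \<inter> F = F" by blast
  ultimately show False using \<open>\<not> reach t h F u (t e)\<close> by auto
qed

subsection \<open>Cuts in the subdivided graph\<close>

lemma sub_simps[simp]:
  "sub_tl tail (f, 0) = Inl (tail f)" "sub_tl tail (f, Suc 0) = Inl (tail f)" "sub_tl tail (f, 2) = Inr f"
  "sub_hd head (f, 0) = Inl (head f)" "sub_hd head (f, Suc 0) = Inr f" "sub_hd head (f, 2) = Inl (head f)"
  by (simp_all add: sub_tl_def sub_hd_def)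

lemma reach_subdivision_of_reach:
  assumes "fst ` Ct \<subseteq> Q" "reach tail head (E - Q) x y"
  shows "reach (sub_tl tail) (sub_hd head) (sub_edges E W - Ct) (Inl x) (Inl y)"
  using assms(2)
proof (induction rule: reach_induct)
  case refl
  then show ?case by (rule reach_refl)
next
  case (step f)
  have nf: "(f, k) \<notin> Ct" for k using step(1) assms(1) by force
  show ?case
  proof (cases "f \<in> W")
    case True
    have "(f, Suc 0) \<in> sub_edges E W - Ct" "(f, 2) \<in> sub_edges E W - Ct"
      using True nf by (auto simp: sub_edges_def)
    then show ?thesis
      using reach_step[of "sub_tl tail" "sub_hd head" _ _ "(f, Suc 0)", simplified]
        reach_step[of "sub_tl tail" "sub_hd head" _ _ "(f, 2)", simplified] step(3)
      by blast
  next
    case False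
    then have "(f, 0) \<in> sub_edges E W - Ct" using nf step(1) by (auto simp: sub_edges_def)
    then show ?thesis
      using reach_step[of "sub_tl tail" "sub_hd head" "sub_edges E W - Ct" "Inl x" "(f, 0)"] step(3)
      by simp
  qed
qed

text \<open>Lift of Q to the subdivided graph; an edge of Q \<inter> W is cut at its first half.\<close>

definition sub_cut :: "'e set \<Rightarrow> 'e set \<Rightarrow> ('e \<times> nat) set" where
  "sub_cut W Q = {(c, 0) | c. c \<in> Q \<and> c \<notin> W} \<union> {(c, 1) | c. c \<in> Q \<and> c \<in> W}"

lemma reach_of_reach_subdivision:
  assumes "W \<subseteq> E" "reach (sub_tl tail) (sub_hd head) (sub_edges E W - sub_cut W Q) (Inl u) y"
  shows "case y of Inl v \<Rightarrow> reach tail head (E - Q) u v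
      | Inr f \<Rightarrow> f \<in> W - Q \<and> reach tail head (E - Q) u (tail f)"
  using assms(2)
proof (induction rule: reach_induct)
  case refl
  then show ?case by (simp add: reach_refl)
next
  case (step x)
  obtain f k where x: "x = (f, k)" by (cases x)
  from step(1) x consider
      "k = 0" "f \<in> E - Q" | "k = 1" "f \<in> W - Q" | "k = 2" "f \<in> W"
    by (auto simp: sub_edges_def sub_cut_def)
  then show ?case
    by cases (use step(3) x reach_step[of tail head "E - Q" u f] assms(1) in auto)
qed

lemma is_cut_iff:
  assumes "W \<subseteq> E"
  shows "is_cut E tail head U W Q \<longleftrightarrow>
    Q \<subseteq> E \<and> (\<forall>u\<in>U. \<forall>e\<in>W - Q. \<not> reach tail head (E - Q) u (tail e))"
proof
  assume "is_cut E tail head U W Q"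
  then obtain Ct where Ct: "Ct \<subseteq> sub_edges E W" "Q = fst ` Ct"
    "\<forall>u\<in>U. \<forall>e\<in>W. \<not> reach (sub_tl tail) (sub_hd head) (sub_edges E W - Ct) (Inl u) (Inr e)"
    unfolding is_cut_def by blast
  have "Q \<subseteq> E"
  proof
    fix q assume "q \<in> Q"
    then obtain k where "(q, k) \<in> Ct" using Ct(2) by force
    then show "q \<in> E" using Ct(1) assms unfolding sub_edges_def by blast
  qed
  moreover have "\<not> reach tail head (E - Q) u (tail e)" if "u \<in> U" "e \<in> W - Q" for u e
  proof
    assume "reach tail head (E - Q) u (tail e)"
    from reach_subdivision_of_reach[OF _ this, of Ct W] Ct(2)
    have "reach (sub_tl tail) (sub_hd head) (sub_edges E W - Ct) (Inl u) (Inl (tail e))" by simp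
    moreover have "(e, Suc 0) \<in> sub_edges E W - Ct"
      using that Ct(2) by (auto simp: sub_edges_def image_iff)
    ultimately have "reach (sub_tl tail) (sub_hd head) (sub_edges E W - Ct) (Inl u) (Inr e)"
      by (rule reach_step[of "sub_tl tail" "sub_hd head" _ _ "(e, Suc 0)", simplified])
    then show False using Ct(3) that by blast
  qed
  ultimately show "Q \<subseteq> E \<and> (\<forall>u\<in>U. \<forall>e\<in>W - Q. \<not> reach tail head (E - Q) u (tail e))" by blast
next
  assume Q: "Q \<subseteq> E \<and> (\<forall>u\<in>U. \<forall>e\<in>W - Q. \<not> reach tail head (E - Q) u (tail e))"
  have "sub_cut W Q \<subseteq> sub_edges E W" using Q by (auto simp: sub_cut_def sub_edges_def)
  moreover have "Q = fst ` sub_cut W Q"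
    unfolding sub_cut_def image_Un by (auto simp: image_def)
  moreover have "\<not> reach (sub_tl tail) (sub_hd head) (sub_edges E W - sub_cut W Q) (Inl u) (Inr e)"
    if "u \<in> U" "e \<in> W" for u e
    using reach_of_reach_subdivision[OF assms, of tail head Q u "Inr e"] Q that by auto
  ultimately show "is_cut E tail head U W Q" unfolding is_cut_def by blast
qed

locale wiretap_network =
  fixes V :: "'v set" and E :: "'e set" and tail head :: "'e \<Rightarrow> 'v" and \<rho> :: 'v
  assumes network: "network V E tail head \<rho>"
begin

abbreviation "S \<equiv> sources V E tail head"
abbreviation "R \<equiv> reach tail head"
abbreviation "D \<equiv> D_set V E tail head"
abbreviation "I \<equiv> I_set V E tail head \<rho>"
abbreviation "\<Omega> \<equiv> Omega V E tail head \<rho>"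

lemma finite_E: "finite E"
  using network by (simp add: network_def)

lemma finite_subset_E: "F \<subseteq> E \<Longrightarrow> finite F"
  using finite_E finite_subset by blast

lemma tail_head_in_V: "e \<in> E \<Longrightarrow> tail e \<in> V \<and> head e \<in> V"
  using network by (simp add: network_def)

lemma rho_in_V: "\<rho> \<in> V"
  using network by (simp add: network_def)

lemma rho_not_source: "\<rho> \<notin> S"
  using network by (simp add: network_def)

lemma reached_from_source:
  assumes "v \<in> V"
  shows "\<exists>\<sigma>\<in>S. R E \<sigma> v"
proof -
  have wf: "wf (arcs tail head E)"
  proof (rule finite_acyclic_wf)
    show "finite (arcs tail head E)" using finite_E unfolding arcs_def by simp
    show "acyclic (arcs tail head E)" using network by (simp add: network_def)
  qed
  show ?thesis
    using assms
  proof (induction v rule: wf_induct_rule[OF wf])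
    case (1 v)
    show ?case
    proof (cases "\<exists>e\<in>E. head e = v")
      case True
      then obtain e where e: "e \<in> E" "head e = v" by blast
      then have "(tail e, v) \<in> arcs tail head E" by (auto simp: arcs_iff)
      then obtain \<sigma> where \<sigma>: "\<sigma> \<in> S" "R E \<sigma> (tail e)"
        using "1.IH" tail_head_in_V[OF e(1)] by blast
      then show ?thesis using reach_step[OF \<sigma>(2) e(1)] e(2) by blast
    next
      case False
      then have "v \<in> S" using "1.prems" by (simp add: sources_def)
      then show ?thesis using reach_refl[of tail head E v] by blast
    qed
  qed
qed

lemma D_set_subset_sources: "D W \<subseteq> S"
  by (auto simp: D_set_def)

lemma D_set_nonempty:
  assumes "W \<subseteq> E" "W \<noteq> {}"
  shows "D W \<noteq> {}"
proof -
  obtain e where e: "e \<in> W" "e \<in> E" using assms by blast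
  then obtain \<sigma> where "\<sigma> \<in> S" "R E \<sigma> (tail e)" using reached_from_source tail_head_in_V by blast
  then have "\<sigma> \<in> D W" using e by (auto simp: D_set_def to_edge_def)
  then show ?thesis by blast
qed

lemma I_set_E: "I E = S"
  using rho_not_source by (auto simp: I_set_def reach_empty_iff)

definition admissible :: "'e set \<Rightarrow> 'e set \<Rightarrow> bool" where
  "admissible W C \<longleftrightarrow> C \<in> Lambda V E tail head \<rho> \<and> W \<subseteq> C \<and> D W \<subseteq> I C"

lemma Omega_eq_Min: "\<Omega> W = Min ((\<lambda>C. card C - card W) ` Collect (admissible W))"
  unfolding Omega_def admissible_def by (rule arg_cong[where f = Min]) auto

lemma finite_admissible: "finite (Collect (admissible W))"
  by (rule finite_subset[of _ "Pow E"]) (auto simp: admissible_def Lambda_def finite_E)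

lemma sources_nonempty: "S \<noteq> {}"
  using reached_from_source[OF rho_in_V] by blast

lemma admissible_E: "W \<subseteq> E \<Longrightarrow> admissible W E"
  using sources_nonempty D_set_subset_sources I_set_E by (auto simp: admissible_def Lambda_def)

lemma Omega_attained:
  assumes "W \<subseteq> E"
  obtains C where "admissible W C" "\<Omega> W = card C - card W"
proof -
  have "\<Omega> W \<in> (\<lambda>C. card C - card W) ` Collect (admissible W)"
    unfolding Omega_eq_Min using finite_admissible admissible_E[OF assms] by (intro Min_in) auto
  then show ?thesis using that by blast
qed

lemma Omega_le: "admissible W C \<Longrightarrow> \<Omega> W \<le> card C - card W"
  unfolding Omega_eq_Min using finite_admissible by (intro Min_le) auto

subsection \<open>Separating cuts\<close>

definition separates :: "'v set \<Rightarrow> 'e set \<Rightarrow> 'e set \<Rightarrow> bool" where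
  "separates U W Q \<longleftrightarrow> Q \<subseteq> E \<and> (\<forall>u\<in>U. \<forall>e\<in>W - Q. \<not> R (E - Q) u (tail e))"

lemma is_cut_iff_separates: "W \<subseteq> E \<Longrightarrow> is_cut E tail head U W Q \<longleftrightarrow> separates U W Q"
  unfolding separates_def by (rule is_cut_iff)

text \<open>Exchanging W for Q inside an optimal C keeps D_W isolated from \<rho>: a path avoiding
  (C - W) \<union> Q must leave E - C at an edge of W - Q, whose tail Q separates from D_W.\<close>

lemma Omega_le_of_separating_cut:
  assumes WE: "W \<subseteq> E" and sep: "separates (D W) W Q"
    and DQ: "D Q \<subseteq> D W" and card: "card Q \<le> card W"
  shows "\<Omega> Q \<le> \<Omega> W"
proof (cases "W = {}")
  case True
  then show ?thesis using card sep finite_subset_E by (simp add: separates_def)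
next
  case False
  have QE: "Q \<subseteq> E" using sep by (simp add: separates_def)
  obtain C where C: "admissible W C" "\<Omega> W = card C - card W" using Omega_attained[OF WE] .
  have CE: "C \<subseteq> E" and WC: "W \<subseteq> C" and DI: "D W \<subseteq> I C"
    using C(1) by (auto simp: admissible_def Lambda_def)
  define C' where "C' = (C - W) \<union> Q"
  have "\<sigma> \<in> I C'" if \<sigma>: "\<sigma> \<in> D W" for \<sigma>
  proof (rule ccontr)
    assume "\<sigma> \<notin> I C'"
    then have r: "R (E - C') \<sigma> \<rho>" using \<sigma> D_set_subset_sources by (auto simp: I_set_def)
    have nr: "\<not> R (E - C) \<sigma> \<rho>" using DI \<sigma> by (auto simp: I_set_def)
    obtain p where p: "p \<in> (E - C') - (E - C)" "R ((E - C') \<inter> (E - C)) \<sigma> (tail p)"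
      using reach_exit_edge[OF r nr] by blast
    have "p \<in> W - Q" using p(1) by (auto simp: C'_def)
    moreover have "R (E - Q) \<sigma> (tail p)" using p(2) by (rule reach_mono) (auto simp: C'_def)
    ultimately show False using sep \<sigma> by (auto simp: separates_def)
  qed
  then have "admissible Q C'"
    using CE QE DQ D_set_nonempty[OF WE False] by (auto simp: admissible_def Lambda_def C'_def)
  moreover have "card C' \<le> card C - card W + card Q"
    using card_Un_le[of "C - W" Q] card_Diff_subset[OF finite_subset_E[OF WE] WC]
    by (simp add: C'_def)
  ultimately show ?thesis using Omega_le[of Q C'] C(2) by simp
qed

definition edges_fed_by :: "'e set \<Rightarrow> 'e set \<Rightarrow> 'e set" where
  "edges_fed_by W Q = {q \<in> Q. D {q} \<subseteq> D W}"

lemma edges_fed_by_subset: "edges_fed_by W Q \<subseteq> Q"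
  by (auto simp: edges_fed_by_def)

lemma D_set_edges_fed_by: "D (edges_fed_by W Q) \<subseteq> D W"
  by (auto simp: edges_fed_by_def D_set_def)

lemma D_set_singleton_subset:
  assumes "e \<in> W" "W \<subseteq> E" "q \<in> E" "\<And>\<sigma>. R E \<sigma> (tail q) \<Longrightarrow> R E \<sigma> (tail e)"
  shows "D {q} \<subseteq> D W"
  using assms by (auto simp: D_set_def to_edge_def)

text \<open>Every edge of Q on a path from D_W to W is fed only by sources in D_W, so dropping
  the other edges of Q keeps W separated.\<close>

lemma separates_edges_fed_by:
  assumes WE: "W \<subseteq> E" and sep: "separates (D W) W Q"
  shows "separates (D W) W (edges_fed_by W Q)"
proof -
  have QE: "Q \<subseteq> E" using sep by (simp add: separates_def)
  have "\<not> R (E - edges_fed_by W Q) u (tail e)" if u: "u \<in> D W" and e: "e \<in> W - edges_fed_by W Q" for u e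
  proof
    assume r: "R (E - edges_fed_by W Q) u (tail e)"
    have "e \<notin> Q" using e D_set_singleton_subset[of e W e] WE by (auto simp: edges_fed_by_def)
    then have nr: "\<not> R (E - Q) u (tail e)" using sep u e by (auto simp: separates_def)
    obtain p where p: "p \<in> (E - edges_fed_by W Q) - (E - Q)"
        "R (E - edges_fed_by W Q) (head p) (tail e)"
      using reach_exit_edge[OF r nr] by blast
    have "R E \<sigma> (tail e)" if "R E \<sigma> (tail p)" for \<sigma>
      using reach_trans[OF reach_step[OF that] reach_mono[OF p(2)]] p(1) by blast
    then have "D {p} \<subseteq> D W" using D_set_singleton_subset[of e W p] e WE p(1) by blast
    then show False using p(1) by (auto simp: edges_fed_by_def)
  qed
  then show ?thesis using edges_fed_by_subset[of W Q] QE by (auto simp: separates_def)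
qed

definition reachable_edges :: "'e set \<Rightarrow> 'e set" where
  "reachable_edges W = {f \<in> E - W. \<exists>u\<in>D W. R (E - W) u (tail f)}"

lemma reachable_edges_mono:
  assumes sep: "separates (D W) W Q" and DQ: "D Q \<subseteq> D W"
  shows "reachable_edges Q \<subseteq> reachable_edges W"
proof
  fix f assume "f \<in> reachable_edges Q"
  then obtain u where f: "f \<in> E - Q" "u \<in> D Q" "R (E - Q) u (tail f)"
    by (auto simp: reachable_edges_def)
  have uW: "u \<in> D W" using f(2) DQ by blast
  have "R (E - W) u x" if "R (E - Q) u x" for x
    using that
  proof (induction rule: reach_induct)
    case refl
    then show ?case by (rule reach_refl)
  next
    case (step g)
    then have "g \<notin> W" using sep uW by (auto simp: separates_def)
    then show ?case using reach_step[OF step(3)] step(1) by blast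
  qed
  moreover have "f \<notin> W" using f sep uW by (auto simp: separates_def)
  ultimately show "f \<in> reachable_edges W" using f uW by (auto simp: reachable_edges_def)
qed

definition frontier :: "'v set \<Rightarrow> 'e set \<Rightarrow> 'e set \<Rightarrow> 'e set" where
  "frontier U W C = {c \<in> C. \<exists>u\<in>U. R (E - W) u (tail c) \<and> R (E - C) u (tail c)}"

lemma frontier_subset: "frontier U W C \<subseteq> C"
  by (auto simp: frontier_def)

lemma separates_frontier:
  assumes sep: "separates U W C"
  shows "separates U W (frontier U W C)"
proof -
  have reach_both: "R (E - W) u x \<and> R (E - C) u x" if u: "u \<in> U" "R (E - frontier U W C) u x" for u x
    using that(2)
  proof (induction rule: reach_induct)
    case refl
    then show ?case by (simp add: reach_refl)
  next
    case (step f)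
    have "f \<notin> C" using step u(1) by (auto simp: frontier_def)
    moreover have "f \<notin> W" using step(3) u(1) sep \<open>f \<notin> C\<close> by (auto simp: separates_def)
    ultimately show ?case using step(1,3) reach_step[of tail head "E - W" u f]
        reach_step[of tail head "E - C" u f] by blast
  qed
  have "\<not> R (E - frontier U W C) u (tail e)" if u: "u \<in> U" and e: "e \<in> W - frontier U W C" for u e
  proof
    assume "R (E - frontier U W C) u (tail e)"
    then have r: "R (E - W) u (tail e)" "R (E - C) u (tail e)" using reach_both[OF u] by auto
    show False
    proof (cases "e \<in> C")
      case True
      then show False using r u e by (auto simp: frontier_def)
    next
      case False
      then show False using r(2) u e sep by (auto simp: separates_def)
    qed
  qed
  moreover have "frontier U W C \<subseteq> E" using frontier_subset[of U W C] sep by (auto simp: separates_def)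
  ultimately show ?thesis by (simp add: separates_def)
qed

lemma frontier_hit:
  assumes "u \<in> U" "c \<in> C - W" "R (E - W) u (tail c)"
  obtains c' where "c' \<in> frontier U W C - W"
proof (cases "R (E - C) u (tail c)")
  case True
  then show ?thesis using that assms by (auto simp: frontier_def)
next
  case False
  obtain p where p: "p \<in> (E - W) - (E - C)" "R ((E - W) \<inter> (E - C)) u (tail p)"
    using reach_exit_edge[OF assms(3) False] by blast
  have "R (E - W) u (tail p)" "R (E - C) u (tail p)"
    using reach_mono[OF p(2)] by auto
  then have "p \<in> frontier U W C - W"
    using assms(1) p(1) by (auto simp: frontier_def)
  then show ?thesis using that by blast
qed

subsection \<open>Lexicographically optimal wiretap sets\<close>

definition rank :: "'e set \<Rightarrow> nat \<times> nat \<times> nat" where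
  "rank W = (\<Omega> W, card W, card (reachable_edges W))"

lemma finite_Wr: "finite (Wr E r)"
  by (rule finite_subset[of _ "Pow E"]) (auto simp: Wr_def finite_E)

end

locale optimal_wiretap = wiretap_network +
  fixes r :: nat and W
  assumes W_in_Wr: "W \<in> Wr E r"
    and rank_min: "\<And>W'. W' \<in> Wr E r \<Longrightarrow> rank W \<le> rank W'"
begin

abbreviation "U \<equiv> D W"

lemma W_subset_E: "W \<subseteq> E"
  using W_in_Wr by (simp add: Wr_def)

lemma Omega_min: "W' \<in> Wr E r \<Longrightarrow> \<Omega> W \<le> \<Omega> W'"
  using rank_min[of W'] by (auto simp: rank_def)

lemma rank_tie:
  assumes "W' \<in> Wr E r" "\<Omega> W' \<le> \<Omega> W" "card W' \<le> card W"
  shows "card W' = card W" "card (reachable_edges W) \<le> card (reachable_edges W')"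
  using rank_min[OF assms(1)] assms(2,3) by (auto simp: rank_def)

lemma edges_fed_by_competitor:
  assumes sep: "separates U W Q" and card: "card Q \<le> card W"
  shows "edges_fed_by W Q \<in> Wr E r" "\<Omega> (edges_fed_by W Q) \<le> \<Omega> W"
    "card (edges_fed_by W Q) \<le> card Q"
proof -
  have QE: "Q \<subseteq> E" using sep by (simp add: separates_def)
  show c: "card (edges_fed_by W Q) \<le> card Q"
    using card_mono[OF finite_subset_E[OF QE] edges_fed_by_subset] .
  show "edges_fed_by W Q \<in> Wr E r"
    using edges_fed_by_subset[of W Q] QE c card W_in_Wr by (auto simp: Wr_def)
  show "\<Omega> (edges_fed_by W Q) \<le> \<Omega> W"
    using Omega_le_of_separating_cut[OF W_subset_E separates_edges_fed_by[OF W_subset_E sep]]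
      D_set_edges_fed_by c card by simp
qed

lemma card_le_separating:
  assumes sep: "separates U W Q"
  shows "card W \<le> card Q"
proof (rule ccontr)
  assume "\<not> card W \<le> card Q"
  then have "card Q < card W" by simp
  moreover have "card (edges_fed_by W Q) = card W"
    using edges_fed_by_competitor[OF sep] rank_tie(1) \<open>card Q < card W\<close> by simp
  ultimately show False using edges_fed_by_competitor(3)[OF sep] by simp
qed

text \<open>No edge of a minimum cut lies strictly in front of W: otherwise the part of its
  frontier fed by D_W would tie with W in \<Omega> and size but reach fewer edges.\<close>

lemma min_cut_behind:
  assumes sep: "separates U W C" and card: "card C \<le> card W"
    and u: "u \<in> U" and c: "c \<in> C - W"
  shows "\<not> R (E - W) u (tail c)"
proof
  assume r: "R (E - W) u (tail c)"
  have CE: "C \<subseteq> E" using sep by (simp add: separates_def)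
  define F where "F = frontier U W C"
  define F' where "F' = edges_fed_by W F"
  have sepF: "separates U W F" unfolding F_def using separates_frontier[OF sep] .
  have cardF: "card F \<le> card W"
    using card_mono[OF finite_subset_E[OF CE] frontier_subset[of U W C]] card by (simp add: F_def)
  have fed: "F' \<in> Wr E r" "\<Omega> F' \<le> \<Omega> W" "card F' \<le> card F"
    using edges_fed_by_competitor[OF sepF cardF] unfolding F'_def by auto
  then have F'_tie: "card F' = card W" "card (reachable_edges W) \<le> card (reachable_edges F')"
    using rank_tie[of F'] cardF by auto
  have finF: "finite F" using finite_subset_E CE frontier_subset[of U W C] unfolding F_def by blast
  have "F' = F"
    using card_subset_eq[OF finF edges_fed_by_subset] fed(3) F'_tie(1) cardF unfolding F'_def by simp
  obtain c' where c': "c' \<in> F - W" using frontier_hit[OF u c r] unfolding F_def .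
  have "c' \<in> reachable_edges W" using c' frontier_subset CE unfolding F_def
    by (auto simp: frontier_def reachable_edges_def)
  moreover have "c' \<notin> reachable_edges F'" using c' \<open>F' = F\<close> by (simp add: reachable_edges_def)
  moreover have "reachable_edges F' \<subseteq> reachable_edges W"
    using reachable_edges_mono separates_edges_fed_by[OF W_subset_E] sepF D_set_edges_fed_by
    unfolding F'_def by blast
  ultimately have "reachable_edges F' \<subset> reachable_edges W" by blast
  moreover have "finite (reachable_edges W)" by (simp add: reachable_edges_def finite_E)
  ultimately have "card (reachable_edges F') < card (reachable_edges W)"
    using psubset_card_mono by blast
  then show False using F'_tie(2) by simp
qed

lemma is_min_cut_iff: "is_min_cut E tail head U W C \<longleftrightarrow> separates U W C \<and> card C = card W"
proof -
  have "separates U W W" using W_subset_E by (simp add: separates_def)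
  then show ?thesis
    using card_le_separating unfolding is_min_cut_def is_cut_iff_separates[OF W_subset_E]
    by (metis le_antisym)
qed

lemma primary_min_cut: "is_primary_min_cut E tail head U W W"
  unfolding is_primary_min_cut_def
proof (intro conjI allI impI)
  show "is_min_cut E tail head U W W" using is_min_cut_iff W_subset_E by (simp add: separates_def)
next
  fix C assume "is_min_cut E tail head U W C"
  then have sep: "separates U W C" and card: "card C = card W" using is_min_cut_iff by auto
  have "separates U C W"
    unfolding separates_def using W_subset_E min_cut_behind[OF sep] card by simp
  moreover have "C \<subseteq> E" using sep by (simp add: separates_def)
  ultimately show "is_cut E tail head U C W" using is_cut_iff_separates by simp
qed

lemma primary_min_cut_unique:
  assumes P: "is_primary_min_cut E tail head U W P"
  shows "P = W"
proof -
  have sepP: "separates U W P" and cardP: "card P = card W"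
    using P is_min_cut_iff by (auto simp: is_primary_min_cut_def)
  have "e \<in> P" if e: "e \<in> W" for e
  proof (rule ccontr)
    assume eP: "e \<notin> P"
    have "card (W - {e}) < card W" using card_Diff1_less[OF finite_subset_E[OF W_subset_E] e] .
    then have "\<not> separates U W (W - {e})" using card_le_separating by (metis not_le)
    then obtain u where u: "u \<in> U" and "R (E - (W - {e})) u (tail e)"
      using W_subset_E e unfolding separates_def by blast
    moreover have "E - (W - {e}) = insert e (E - W)" using e W_subset_E by blast
    ultimately have r: "R (E - W) u (tail e)" using reach_insert_to_tail by metis
    have nr: "\<not> R (E - P) u (tail e)" using sepP u e eP by (auto simp: separates_def)
    obtain p where p: "p \<in> (E - W) - (E - P)" "R ((E - W) \<inter> (E - P)) u (tail p)"
      using reach_exit_edge[OF r nr] by blast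
    have "p \<in> P - W" using p(1) by blast
    moreover have "card P \<le> card W" using cardP by simp
    ultimately have "\<not> R (E - W) u (tail p)" using min_cut_behind[OF sepP _ u] by simp
    then show False using reach_mono[OF p(2)] by blast
  qed
  then have "W \<subseteq> P" by blast
  moreover have "finite P" using sepP finite_subset_E by (simp add: separates_def)
  ultimately show ?thesis using card_subset_eq[of P W] cardP by simp
qed

lemma hat_eq: "hat V E tail head W = W"
  unfolding hat_def using primary_min_cut primary_min_cut_unique by (rule the_equality)

end

lemma (in wiretap_network) optimal_wiretap_exists: "\<exists>W. optimal_wiretap V E tail head \<rho> r W"
proof -
  have "{} \<in> Wr E r" by (simp add: Wr_def)
  then have "Min (rank ` Wr E r) \<in> rank ` Wr E r" using finite_Wr by (intro Min_in) auto
  then obtain W where "W \<in> Wr E r" "rank W = Min (rank ` Wr E r)" by auto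
  then have "optimal_wiretap V E tail head \<rho> r W"
    using finite_Wr by unfold_locales auto
  then show ?thesis ..
qed

theorem lemma8:
  fixes V :: "'v set" and E :: "'e set" and tail head :: "'e \<Rightarrow> 'v" and \<rho> :: 'v and r :: nat
  assumes "network V E tail head \<rho>"
  shows "Min (Omega V E tail head \<rho> ` Wr E r) =
         Min (Omega V E tail head \<rho> ` {W \<in> Wr E r. W = hat V E tail head W})"
proof -
  interpret wiretap_network V E tail head \<rho> using assms by unfold_locales
  obtain W where "optimal_wiretap V E tail head \<rho> r W" using optimal_wiretap_exists by blast
  then interpret optimal_wiretap V E tail head \<rho> r W .
  let ?P = "{W \<in> Wr E r. W = hat V E tail head W}"
  have W_in: "W \<in> ?P" using W_in_Wr hat_eq by simp
  have "finite (\<Omega> ` ?P)" using finite_Wr by simp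
  then have "Min (\<Omega> ` ?P) \<le> \<Omega> W" using W_in by (intro Min_le) auto
  also have "\<Omega> W \<le> Min (\<Omega> ` Wr E r)" using W_in_Wr finite_Wr Omega_min by (subst Min_ge_iff) auto
  finally have "Min (\<Omega> ` ?P) \<le> Min (\<Omega> ` Wr E r)" .
  moreover have "Min (\<Omega> ` Wr E r) \<le> Min (\<Omega> ` ?P)"
    using W_in finite_Wr by (intro Min_antimono) auto
  ultimately show ?thesis by simp
qed

end
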